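(* In the setting of the context, let $\theta^*$ be an indifference index consistent with the inverse problem and $X^{m,s}$ a corresponding solution, and let $\hat R_{m,s}(x)=G(x,\theta^*(x))-\varphi_{m,s}(x)V(\theta^*(x))$ on $X^*(\Theta)$. If the function $R_{m,s}(x)=G(x,\theta^*(x))+\varphi_{m,s}(x)(R_{m,s}(X_0)-V(\theta^*(x)))$ solves $\frac12\frac{d}{dm}\frac{d}{ds}f=\rho f-c$, then so does $\hat R_{m,s}$.
   Context: Data: $\rho>0$, an interval $\Theta$, a differentiable $V:\Theta\to\mathbb{R}$, a twice continuously differentiable $G(x,\theta)$, a running reward $c(x)$, a starting point $X_0$. For a speed measure $m$ and strictly increasing continuous scale $s$, $X^{m,s}$ is the regular one-dimensional generalised diffusion with these characteristics on state space $I^m$ started at $X_0$ (either both endpoints non-reflecting, or started at a reflecting endpoint with the other non-reflecting); $\mathrm{int}(I^m)$ is the interior plus accessible boundary points. $X^{m,s}$ solves the inverse problem if $V_{X^{m,s}}(\theta):=\sup_\tau\mathbb{E}_{X_0}[\int_0^\tau e^{-\rho t}c(X^{m,s}_t)dt+e^{-\rho\tau}G(X^{m,s}_\tau,\theta)]=V(\theta)$ for all $\theta$ and the value is attained by stopping at the hitting time of a threshold $\ge X_0$. $\varphi_{m,s}$ is the increasing positive solution of $\frac12\frac{d}{dm}\frac{d}{ds}f=\rho f$ with $\varphi_{m,s}(X_0)=1$; $R_{m,s}(X_0)=\mathbb{E}_{X_0}[\int_0^\infty e^{-\rho t}c(X^{m,s}_t)dt]$. $X^*(\theta)=\arg\max_{x\in\mathrm{int}(I^m)}(G(x,\theta)-R_{m,s}(x))/\varphi_{m,s}(x)$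 and $X^*(\Theta)=\bigcup_\theta X^*(\theta)$. An indifference index $\theta^*:I^m\to\Theta$ is consistent if for some solution $X^{m,s}$, $x^*=(\theta^* )^{-1}$ is an optimal threshold strategy, i.e. $x\in X^*(\theta^*(x))$. *)

theory Defs
  imports "HOL-Analysis.Analysis"
begin

text \<open>Generalised second-order equation  (1/2) d/dm d/ds f = g  on a set S,
  in integrated (Feller) form: f has an s-derivative Df with
  f y - f x = int_{(x,y]} Df ds  and  Df y - Df x = int_{(x,y]} 2 g dm  for x < y in S.
  The s-integral is taken w.r.t. the Lebesgue-Stieltjes measure of s.\<close>
definition gen_ode_solves ::
  "real measure \<Rightarrow> (real \<Rightarrow> real) \<Rightarrow> (real \<Rightarrow> real) \<Rightarrow> real set \<Rightarrow> (real \<Rightarrow> real) \<Rightarrow> bool" where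
  "gen_ode_solves m s g S f \<longleftrightarrow>
     (\<exists>Df. \<forall>x\<in>S. \<forall>y\<in>S. x < y \<longrightarrow>
        set_integrable (interval_measure s) {x<..y} Df \<and>
        f y - f x = (LINT t:{x<..y}|interval_measure s. Df t) \<and>
        set_integrable m {x<..y} g \<and>
        Df y - Df x = 2 * (LINT t:{x<..y}|m. g t))"

definition Xstar ::
  "real set \<Rightarrow> (real \<Rightarrow> real \<Rightarrow> real) \<Rightarrow> (real \<Rightarrow> real) \<Rightarrow> (real \<Rightarrow> real) \<Rightarrow> real \<Rightarrow> real set" where
  "Xstar J G R \<phi> \<theta> = {x \<in> J. \<forall>y\<in>J. (G y \<theta> - R y) / \<phi> y \<le> (G x \<theta> - R x) / \<phi> x}"

end

theory Submission
  imports Defs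
begin

text \<open>The equation is linear. Since phi solves the homogeneous equation
  (1/2) d/dm d/ds f = rho f on J, which contains X*(Theta), subtracting R(X0) phi from the given
  solution R of (1/2) d/dm d/ds f = rho f - c leaves a solution of the same equation, and
  R - R(X0) phi is exactly R-hat.\<close>

lemma gen_ode_solves_subset:
  assumes "gen_ode_solves m s g S f" and "T \<subseteq> S"
  shows "gen_ode_solves m s g T f"
  using assms unfolding gen_ode_solves_def by blast

lemma gen_ode_solves_cmult:
  assumes "gen_ode_solves m s g S f"
  shows "gen_ode_solves m s (\<lambda>x. k * g x) S (\<lambda>x. k * f x)"
proof -
  obtain Df where Df: "\<forall>x\<in>S. \<forall>y\<in>S. x < y \<longrightarrow>
        set_integrable (interval_measure s) {x<..y} Df \<and>
        f y - f x = (LINT t:{x<..y}|interval_measure s. Df t) \<and>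
        set_integrable m {x<..y} g \<and>
        Df y - Df x = 2 * (LINT t:{x<..y}|m. g t)"
    using assms unfolding gen_ode_solves_def by blast
  show ?thesis
    unfolding gen_ode_solves_def
  proof (intro exI[of _ "\<lambda>t. k * Df t"] ballI impI conjI)
    fix x y assume "x \<in> S" "y \<in> S" "x < y"
    with Df have D: "set_integrable (interval_measure s) {x<..y} Df"
        "f y - f x = (LINT t:{x<..y}|interval_measure s. Df t)"
        "set_integrable m {x<..y} g" "Df y - Df x = 2 * (LINT t:{x<..y}|m. g t)"
      by auto
    show "set_integrable (interval_measure s) {x<..y} (\<lambda>t. k * Df t)"
      using D(1) by (rule set_integrable_mult_right)
    show "k * f y - k * f x = (LINT t:{x<..y}|interval_measure s. k * Df t)"
      using D(2) by (simp add: set_integral_mult_right right_diff_distrib[symmetric])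
    show "set_integrable m {x<..y} (\<lambda>t. k * g t)"
      using D(3) by (rule set_integrable_mult_right)
    show "k * Df y - k * Df x = 2 * (LINT t:{x<..y}|m. k * g t)"
      using D(4) by (simp add: set_integral_mult_right right_diff_distrib[symmetric])
  qed
qed

lemma gen_ode_solves_diff:
  assumes "gen_ode_solves m s g1 S f1" and "gen_ode_solves m s g2 S f2"
  shows "gen_ode_solves m s (\<lambda>x. g1 x - g2 x) S (\<lambda>x. f1 x - f2 x)"
proof -
  obtain D1 where D1: "\<forall>x\<in>S. \<forall>y\<in>S. x < y \<longrightarrow>
        set_integrable (interval_measure s) {x<..y} D1 \<and>
        f1 y - f1 x = (LINT t:{x<..y}|interval_measure s. D1 t) \<and>
        set_integrable m {x<..y} g1 \<and>
        D1 y - D1 x = 2 * (LINT t:{x<..y}|m. g1 t)"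
    using assms(1) unfolding gen_ode_solves_def by blast
  obtain D2 where D2: "\<forall>x\<in>S. \<forall>y\<in>S. x < y \<longrightarrow>
        set_integrable (interval_measure s) {x<..y} D2 \<and>
        f2 y - f2 x = (LINT t:{x<..y}|interval_measure s. D2 t) \<and>
        set_integrable m {x<..y} g2 \<and>
        D2 y - D2 x = 2 * (LINT t:{x<..y}|m. g2 t)"
    using assms(2) unfolding gen_ode_solves_def by blast
  show ?thesis
    unfolding gen_ode_solves_def
  proof (intro exI[of _ "\<lambda>t. D1 t - D2 t"] ballI impI conjI)
    fix x y assume xy: "x \<in> S" "y \<in> S" "x < y"
    from D1 xy have P: "set_integrable (interval_measure s) {x<..y} D1"
        "f1 y - f1 x = (LINT t:{x<..y}|interval_measure s. D1 t)"
        "set_integrable m {x<..y} g1" "D1 y - D1 x = 2 * (LINT t:{x<..y}|m. g1 t)"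
      by auto
    from D2 xy have Q: "set_integrable (interval_measure s) {x<..y} D2"
        "f2 y - f2 x = (LINT t:{x<..y}|interval_measure s. D2 t)"
        "set_integrable m {x<..y} g2" "D2 y - D2 x = 2 * (LINT t:{x<..y}|m. g2 t)"
      by auto
    show "set_integrable (interval_measure s) {x<..y} (\<lambda>t. D1 t - D2 t)"
      using P(1) Q(1) by (rule set_integral_diff(1))
    show "f1 y - f2 y - (f1 x - f2 x) = (LINT t:{x<..y}|interval_measure s. D1 t - D2 t)"
      using P Q by simp
    show "set_integrable m {x<..y} (\<lambda>t. g1 t - g2 t)"
      using P(3) Q(3) by (rule set_integral_diff(1))
    show "D1 y - D2 y - (D1 x - D2 x) = 2 * (LINT t:{x<..y}|m. g1 t - g2 t)"
      using P Q by (simp add: algebra_simps)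
  qed
qed

theorem lemma4p13:
  fixes \<rho> :: real and \<Theta> :: "real set" and V :: "real \<Rightarrow> real"
    and G :: "real \<Rightarrow> real \<Rightarrow> real" and c :: "real \<Rightarrow> real" and X0 :: real
    and m :: "real measure" and s :: "real \<Rightarrow> real" and J :: "real set"
    and \<phi> :: "real \<Rightarrow> real" and Rms :: "real \<Rightarrow> real" and \<theta>s :: "real \<Rightarrow> real"
  assumes rho: "\<rho> > 0"
    and Theta: "is_interval \<Theta>"
    and V_diff: "\<forall>\<theta>\<in>\<Theta>. V differentiable (at \<theta> within \<Theta>)"
    and m_sets: "sets m = sets borel"
    and s_mono: "strict_mono s" and s_cont: "continuous_on UNIV s"
    and J_int: "is_interval J" and X0_J: "X0 \<in> J"
    and phi_ode: "gen_ode_solves m s (\<lambda>x. \<rho> * \<phi> x) J \<phi>"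
    and phi_pos: "\<forall>x\<in>J. \<phi> x > 0"
    and phi_mono: "mono_on J \<phi>"
    and phi_X0: "\<phi> X0 = 1"
    and theta_range: "\<theta>s ` J \<subseteq> \<Theta>"
    and consistent: "\<forall>x \<in> (\<Union>\<theta>\<in>\<Theta>. Xstar J G Rms \<phi> \<theta>). x \<in> Xstar J G Rms \<phi> (\<theta>s x)"
    and R_solves: "gen_ode_solves m s
         (\<lambda>x. \<rho> * (G x (\<theta>s x) + \<phi> x * (Rms X0 - V (\<theta>s x))) - c x)
         (\<Union>\<theta>\<in>\<Theta>. Xstar J G Rms \<phi> \<theta>)
         (\<lambda>x. G x (\<theta>s x) + \<phi> x * (Rms X0 - V (\<theta>s x)))"
  shows "gen_ode_solves m s
         (\<lambda>x. \<rho> * (G x (\<theta>s x) - \<phi> x * V (\<theta>s x)) - c x)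
         (\<Union>\<theta>\<in>\<Theta>. Xstar J G Rms \<phi> \<theta>)
         (\<lambda>x. G x (\<theta>s x) - \<phi> x * V (\<theta>s x))"
proof -
  let ?k = "Rms X0"
  have "(\<Union>\<theta>\<in>\<Theta>. Xstar J G Rms \<phi> \<theta>) \<subseteq> J"
    unfolding Xstar_def by blast
  from gen_ode_solves_cmult[OF gen_ode_solves_subset[OF phi_ode this]]
  have "gen_ode_solves m s (\<lambda>x. ?k * (\<rho> * \<phi> x))
      (\<Union>\<theta>\<in>\<Theta>. Xstar J G Rms \<phi> \<theta>) (\<lambda>x. ?k * \<phi> x)" .
  then have "gen_ode_solves m s
      (\<lambda>x. \<rho> * (G x (\<theta>s x) + \<phi> x * (?k - V (\<theta>s x))) - c x - ?k * (\<rho> * \<phi> x))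
      (\<Union>\<theta>\<in>\<Theta>. Xstar J G Rms \<phi> \<theta>)
      (\<lambda>x. G x (\<theta>s x) + \<phi> x * (?k - V (\<theta>s x)) - ?k * \<phi> x)"
    by (rule gen_ode_solves_diff[OF R_solves])
  moreover have "(\<lambda>x. \<rho> * (G x (\<theta>s x) + \<phi> x * (?k - V (\<theta>s x))) - c x - ?k * (\<rho> * \<phi> x))
      = (\<lambda>x. \<rho> * (G x (\<theta>s x) - \<phi> x * V (\<theta>s x)) - c x)"
       "(\<lambda>x. G x (\<theta>s x) + \<phi> x * (?k - V (\<theta>s x)) - ?k * \<phi> x)
      = (\<lambda>x. G x (\<theta>s x) - \<phi> x * V (\<theta>s x))"
    by (simp_all add: fun_eq_iff algebra_simps)
  ultimately show ?thesis
    by simp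
qed

end
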